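(* In the Waterfilling bucketing construction described in the context, let $A$ be the joint strategy matrix produced for a set of analysts and let $A'$ be the joint strategy matrix produced after additionally adding one analyst with weight $s_i>0$ and strategy matrix $A_i$ every column of which has $L_1$ norm $1$. Then $\|A'\|_1=\|A\|_1+s_i$.
   Context: Matrices have $n$ columns. For a matrix $M$, $\|M\|_1$ is the maximum over columns of the column's $L_1$ norm. Fix a norm $\|\cdot\|$ on row vectors. Each analyst $l$ has a weight $s_l>0$ and a strategy matrix $A_l$ whose every column has $L_1$ norm $1$. Bucketing: maintain a set $B$ of unit vectors $e$ with weights $f_B(e)>0$, initially empty; processing analyst $l$ means, for each nonzero row $v$ of $s_lA_l$, setting $e=v/\|v\|$ and, if $e\in B$, increasing $f_B(e)$ by $\|v\|$, otherwise adding $e$ to $B$ with $f_B(e)=\|v\|$. The joint strategy matrix has one row $f_B(e)e$ for each $e\in B$. *)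

theory Defs
  imports "HOL-Analysis.Analysis"
begin

type_synonym 'n rowvec = "real ^ 'n"
type_synonym 'n matrix = "'n rowvec list"

definition is_norm :: "('n::finite rowvec \<Rightarrow> real) \<Rightarrow> bool" where
  "is_norm N \<longleftrightarrow>
     (\<forall>x. 0 \<le> N x) \<and> (\<forall>x. N x = 0 \<longleftrightarrow> x = 0) \<and>
     (\<forall>c x. N (c *\<^sub>R x) = \<bar>c\<bar> * N x) \<and> (\<forall>x y. N (x + y) \<le> N x + N y)"

definition col_l1 :: "'n::finite matrix \<Rightarrow> 'n \<Rightarrow> real" where
  "col_l1 M j = sum_list (map (\<lambda>r. \<bar>r $ j\<bar>) M)"

definition mat_norm1 :: "'n::finite matrix \<Rightarrow> real" where
  "mat_norm1 M = Max (range (col_l1 M))"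

text \<open>Bucket state: the set B of unit vectors together with the weight function f_B.\<close>
type_synonym 'n bucket = "'n rowvec set \<times> ('n rowvec \<Rightarrow> real)"

definition empty_bucket :: "'n::finite bucket" where
  "empty_bucket = ({}, (\<lambda>_. 0))"

definition process_row :: "('n::finite rowvec \<Rightarrow> real) \<Rightarrow> 'n bucket \<Rightarrow> 'n rowvec \<Rightarrow> 'n bucket" where
  "process_row N st v =
     (if v = 0 then st
      else (let (B, f) = st; e = (1 / N v) *\<^sub>R v in
            if e \<in> B then (B, f(e := f e + N v)) else (insert e B, f(e := N v))))"

text \<open>An analyst is a pair (s, A) of a weight and a strategy matrix; processing it means
processing each row of s A in turn.\<close>
definition process_analyst :: "('n::finite rowvec \<Rightarrow> real) \<Rightarrow> real \<times> 'n matrix \<Rightarrow> 'n bucket \<Rightarrow> 'n bucket" where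
  "process_analyst N a st = fold (\<lambda>v st'. process_row N st' v) (map (\<lambda>r. fst a *\<^sub>R r) (snd a)) st"

definition bucketing :: "('n::finite rowvec \<Rightarrow> real) \<Rightarrow> (real \<times> 'n matrix) list \<Rightarrow> 'n bucket" where
  "bucketing N analysts = fold (process_analyst N) analysts empty_bucket"

definition joint_matrix :: "('n::finite rowvec \<Rightarrow> real) \<Rightarrow> (real \<times> 'n matrix) list \<Rightarrow> 'n matrix" where
  "joint_matrix N analysts =
     (let (B, f) = bucketing N analysts;
          xs = (SOME xs. distinct xs \<and> set xs = B)
      in map (\<lambda>e. f e *\<^sub>R e) xs)"

definition valid_analyst :: "real \<times> 'n::finite matrix \<Rightarrow> bool" where
  "valid_analyst a \<longleftrightarrow> fst a > 0 \<and> (\<forall>j. col_l1 (snd a) j = 1)"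

end

theory Submission
  imports Defs
begin

text \<open>Bucketing only ever adds nonnegative multiples of a unit vector to a bucket whose weight
is nonnegative, so no cancellation occurs: a nonzero row \<open>v = N v *\<^sub>R e\<close> raises the \<open>L\<^sub>1\<close>
mass of every column \<open>j\<close> of the joint matrix by exactly \<open>\<bar>v $ j\<bar>\<close>.  Hence column \<open>j\<close> of the
joint matrix has \<open>L\<^sub>1\<close> norm \<open>\<Sum>\<^sub>l \<bar>s\<^sub>l\<bar> * col_l1 A\<^sub>l j\<close>, which is \<open>\<Sum>\<^sub>l s\<^sub>l\<close> for valid
analysts, independently of \<open>j\<close>.\<close>

lemma is_norm_pos:
  assumes "is_norm N" and "v \<noteq> 0"
  shows "N v > 0"
  using assms unfolding is_norm_def by (metis less_eq_real_def)

lemma col_l1_scaleR: "col_l1 (map (\<lambda>r. c *\<^sub>R r) M) j = \<bar>c\<bar> * col_l1 M j"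
  by (induction M) (simp_all add: col_l1_def abs_mult algebra_simps)

lemma mat_norm1_const_cols:
  assumes "\<And>j. col_l1 M j = c"
  shows "mat_norm1 M = c"
proof -
  have "range (col_l1 M) = {c}"
    using assms by auto
  then show ?thesis
    by (simp add: mat_norm1_def)
qed

definition wf_bucket :: "'n::finite bucket \<Rightarrow> bool" where
  "wf_bucket st \<longleftrightarrow>
     finite (fst st) \<and> (\<forall>e. 0 \<le> snd st e) \<and> (\<forall>e. e \<notin> fst st \<longrightarrow> snd st e = 0)"

definition bucket_col_mass :: "'n::finite bucket \<Rightarrow> 'n \<Rightarrow> real" where
  "bucket_col_mass st j = (\<Sum>e\<in>fst st. snd st e * \<bar>e $ j\<bar>)"

lemma wf_empty_bucket: "wf_bucket empty_bucket"
  by (simp add: wf_bucket_def empty_bucket_def)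

lemma bucket_col_mass_empty: "bucket_col_mass empty_bucket j = 0"
  by (simp add: bucket_col_mass_def empty_bucket_def)

text \<open>Since the weights vanish outside \<open>B\<close>, both branches of \<^const>\<open>process_row\<close> have the
same shape.\<close>

lemma process_row_nonzero:
  assumes "\<forall>e. e \<notin> B \<longrightarrow> f e = 0" and "v \<noteq> 0"
  shows "process_row N (B, f) v =
           (let e = (1 / N v) *\<^sub>R v in (insert e B, f(e := f e + N v)))"
  using assms by (auto simp: process_row_def Let_def insert_absorb)

lemma sum_insert_fun_upd_add:
  fixes f w :: "'a \<Rightarrow> real"
  assumes "finite B" and "e \<notin> B \<Longrightarrow> f e = 0"
  shows "(\<Sum>x\<in>insert e B. (f(e := f e + c)) x * w x) = (\<Sum>x\<in>B. f x * w x) + c * w e"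
proof -
  have rest: "(\<Sum>x\<in>B - {e}. (f(e := f e + c)) x * w x) = (\<Sum>x\<in>B - {e}. f x * w x)"
    by (rule sum.cong) auto
  have "(\<Sum>x\<in>B. f x * w x) = (\<Sum>x\<in>insert e B. f x * w x)"
    using assms by (cases "e \<in> B") (simp_all add: insert_absorb)
  also have "\<dots> = f e * w e + (\<Sum>x\<in>B - {e}. f x * w x)"
    using assms(1) by (rule sum.insert_remove)
  finally show ?thesis
    using assms(1) rest by (simp add: sum.insert_remove algebra_simps)
qed

lemma process_row_wf_col_mass:
  assumes N: "is_norm N" and wf: "wf_bucket st"
  shows "wf_bucket (process_row N st v) \<and>
         bucket_col_mass (process_row N st v) j = bucket_col_mass st j + \<bar>v $ j\<bar>"
proof -
  obtain B f where st: "st = (B, f)"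
    by fastforce
  have fin: "finite B" and nonneg: "\<forall>e. 0 \<le> f e" and outside: "\<forall>e. e \<notin> B \<longrightarrow> f e = 0"
    using wf st by (simp_all add: wf_bucket_def)
  show ?thesis
  proof (cases "v = 0")
    case True
    then show ?thesis
      using wf by (simp add: process_row_def)
  next
    case False
    define e where "e = (1 / N v) *\<^sub>R v"
    have pos: "N v > 0"
      using is_norm_pos[OF N False] .
    have step: "process_row N st v = (insert e B, f(e := f e + N v))"
      using process_row_nonzero[OF outside False, of N] by (simp add: st e_def Let_def)
    have unit_mass: "N v * \<bar>e $ j\<bar> = \<bar>v $ j\<bar>"
      using pos by (simp add: e_def abs_mult)
    have "wf_bucket (insert e B, f(e := f e + N v))"
      using fin nonneg outside pos by (simp add: wf_bucket_def add_nonneg_nonneg)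
    moreover have "bucket_col_mass (insert e B, f(e := f e + N v)) j
                     = bucket_col_mass st j + \<bar>v $ j\<bar>"
      using sum_insert_fun_upd_add[OF fin, of e f "N v" "\<lambda>x. \<bar>x $ j\<bar>"] outside unit_mass
      by (simp add: bucket_col_mass_def st)
    ultimately show ?thesis
      by (simp add: step)
  qed
qed

lemma fold_process_row_wf_col_mass:
  assumes N: "is_norm N" and "wf_bucket st"
  shows "wf_bucket (fold (\<lambda>v st'. process_row N st' v) vs st) \<and>
         bucket_col_mass (fold (\<lambda>v st'. process_row N st' v) vs st) j
           = bucket_col_mass st j + col_l1 vs j"
  using assms(2)
proof (induction vs arbitrary: st)
  case Nil
  then show ?case
    by (simp add: col_l1_def)
next
  case (Cons v vs)
  then show ?case
    using process_row_wf_col_mass[OF N Cons.prems, of v j] by (simp add: col_l1_def)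
qed

lemma process_analyst_wf_col_mass:
  assumes "is_norm N" and "wf_bucket st"
  shows "wf_bucket (process_analyst N a st) \<and>
         bucket_col_mass (process_analyst N a st) j
           = bucket_col_mass st j + \<bar>fst a\<bar> * col_l1 (snd a) j"
  using fold_process_row_wf_col_mass[OF assms] unfolding process_analyst_def
  by (simp add: col_l1_scaleR)

lemma bucketing_wf_col_mass:
  assumes "is_norm N"
  shows "wf_bucket (bucketing N as) \<and>
         bucket_col_mass (bucketing N as) j = (\<Sum>a\<leftarrow>as. \<bar>fst a\<bar> * col_l1 (snd a) j)"
proof -
  have "wf_bucket (fold (process_analyst N) as st) \<and>
        bucket_col_mass (fold (process_analyst N) as st) j
          = bucket_col_mass st j + (\<Sum>a\<leftarrow>as. \<bar>fst a\<bar> * col_l1 (snd a) j)"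
    if "wf_bucket st" for st
    using that
  proof (induction as arbitrary: st)
    case (Cons a as)
    then show ?case
      using process_analyst_wf_col_mass[OF assms Cons.prems, of a j] by simp
  qed simp
  from this[OF wf_empty_bucket] show ?thesis
    unfolding bucketing_def by (simp add: bucket_col_mass_empty)
qed

lemma col_l1_joint_matrix:
  assumes N: "is_norm N"
  shows "col_l1 (joint_matrix N as) j = (\<Sum>a\<leftarrow>as. \<bar>fst a\<bar> * col_l1 (snd a) j)"
proof -
  obtain B f where bf: "bucketing N as = (B, f)"
    by fastforce
  have wf: "wf_bucket (B, f)"
    and mass: "bucket_col_mass (B, f) j = (\<Sum>a\<leftarrow>as. \<bar>fst a\<bar> * col_l1 (snd a) j)"
    using bucketing_wf_col_mass[OF N, of as j] by (simp_all add: bf)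
  define xs where "xs = (SOME xs. distinct xs \<and> set xs = B)"
  have xs: "distinct xs \<and> set xs = B"
    unfolding xs_def
    by (rule someI_ex) (use finite_distinct_list wf in \<open>auto simp: wf_bucket_def\<close>)
  have "col_l1 (joint_matrix N as) j = (\<Sum>e\<leftarrow>xs. \<bar>f e * e $ j\<bar>)"
    by (simp add: joint_matrix_def bf xs_def col_l1_def o_def)
  also have "\<dots> = (\<Sum>e\<in>B. \<bar>f e * e $ j\<bar>)"
    using xs by (metis sum_list_distinct_conv_sum_set)
  also have "\<dots> = bucket_col_mass (B, f) j"
    using wf by (simp add: bucket_col_mass_def wf_bucket_def abs_mult)
  finally show ?thesis
    using mass by simp
qed

lemma mat_norm1_joint_matrix:
  assumes "is_norm N" and "\<forall>a\<in>set as. valid_analyst a"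
  shows "mat_norm1 (joint_matrix N as) = (\<Sum>a\<leftarrow>as. fst a)"
proof (rule mat_norm1_const_cols)
  fix j
  have "(\<Sum>a\<leftarrow>as. \<bar>fst a\<bar> * col_l1 (snd a) j) = (\<Sum>a\<leftarrow>as. fst a)"
    using assms(2) by (intro arg_cong[where f = sum_list] map_cong) (auto simp: valid_analyst_def)
  then show "col_l1 (joint_matrix N as) j = (\<Sum>a\<leftarrow>as. fst a)"
    using col_l1_joint_matrix[OF assms(1)] by simp
qed

theorem mainTheorem4:
  fixes N :: "'n::finite rowvec \<Rightarrow> real"
    and analysts :: "(real \<times> 'n matrix) list"
    and s_i :: real and A_i :: "'n matrix"
  assumes "is_norm N"
    and "\<forall>a \<in> set analysts. valid_analyst a"
    and "s_i > 0"
    and "\<forall>j. col_l1 A_i j = 1"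
  shows "mat_norm1 (joint_matrix N (analysts @ [(s_i, A_i)]))
         = mat_norm1 (joint_matrix N analysts) + s_i"
proof -
  have "\<forall>a \<in> set (analysts @ [(s_i, A_i)]). valid_analyst a"
    using assms(2-4) by (auto simp: valid_analyst_def)
  then show ?thesis
    using mat_norm1_joint_matrix[OF assms(1)] assms(2) by simp
qed

end
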